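(* Let $n\ge3$, let $S_n$ act on $V=\mathbb{C}^n$ by permutations, fix $a,b,c\in\mathbb{C}$, and let $*\in\{L,C\}$. For $g\in S_n$ let $\phi^*_g$ be the $g$-component of $\phi(\kappa^*_{\mathrm{tri}},\kappa^L_{\mathrm{tri}})$. If $g$ is not a $5$-cycle, then $\phi^*_g\equiv0$.
   Context: $S_n$ acts by $\sigma e_i=e_{\sigma(i)}$; $V^g$ is the fixed space of $g$. $\kappa^L_{\mathrm{tri}}$ is the linear 2-cochain supported on 3-cycles with $\kappa^L_{(ijk)}(e_i,e_j)=\kappa^L_{(ijk)}(e_j,e_k)=\kappa^L_{(ijk)}(e_k,e_i)=a(e_i+e_j+e_k)+b\sum_{l\notin\{i,j,k\}}e_l$ and $\kappa^L_{(ijk)}(e_l,e_m)=0$ whenever $e_l$ or $e_m$ lies in $V^{(ijk)}$; $\kappa^C_{\mathrm{tri}}$ is the constant 2-cochain supported on 3-cycles with $\kappa^C_{(ijk)}(e_i,e_j)=\kappa^C_{(ijk)}(e_j,e_k)=\kappa^C_{(ijk)}(e_k,e_i)=c$ and $\kappa^C_{(ijk)}(e_l,e_m)=0$ whenever $e_l$ or $e_m$ lies in $V^{(ijk)}$. For $\alpha$ linear or constant and $\beta$ linear 2-cochains ($\alpha=\sum_g\alpha_gg$ etc.), $\phi(\alpha,\beta)=\sum_g\phi_gg$ with $\phi_g=\sum_{xy=g}\phi_{x,y}$, $\phi_{x,y}(v_1,v_2,v_3)=\alpha_x(v_1+yv_1,\beta_y(v_2,v_3))+\alpha_x(v_2+yv_2,\beta_y(v_3,v_1))+\alpha_x(v_3+yv_3,\beta_y(v_1,v_2))$.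 *)

theory Defs
  imports Complex_Main "HOL-Combinatorics.Combinatorics" "HOL-Library.Function_Algebras"
begin

definition vecV :: "nat \<Rightarrow> (nat \<Rightarrow> complex) set" where
  "vecV n = {v. \<forall>i\<ge>n. v i = 0}"

(* permutation action  sigma e_i = e_(sigma i), extended linearly *)
definition act :: "(nat \<Rightarrow> nat) \<Rightarrow> (nat \<Rightarrow> complex) \<Rightarrow> (nat \<Rightarrow> complex)" where
  "act \<sigma> v = (\<lambda>l. v (inv \<sigma> l))"

definition is_kcycle :: "nat \<Rightarrow> nat \<Rightarrow> (nat \<Rightarrow> nat) \<Rightarrow> bool" where
  "is_kcycle n k g \<longleftrightarrow> (\<exists>cs. length cs = k \<and> distinct cs \<and> set cs \<subseteq> {..<n} \<and> g = cycle_of_list cs)"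

(* Values on basis pairs (e_l, e_m) of kappa^L_tri at g.  For a 3-cycle (i j k), the
   ordered pairs (i,j),(j,k),(k,i) are exactly the pairs (l, g l) with l moved by g;
   the cochain is alternating, so the reversed pairs get the negative value, and all
   pairs involving a fixed point of g vanish. *)
definition kappaL_basis :: "nat \<Rightarrow> complex \<Rightarrow> complex \<Rightarrow> (nat \<Rightarrow> nat) \<Rightarrow> nat \<Rightarrow> nat \<Rightarrow> (nat \<Rightarrow> complex)" where
  "kappaL_basis n a b g l m =
     (let w = (\<lambda>p. if p < n then (if g p \<noteq> p then a else b) else 0) in
      if is_kcycle n 3 g \<and> g l \<noteq> l \<and> m = g l then w
      else if is_kcycle n 3 g \<and> g m \<noteq> m \<and> l = g m then - w
      else 0)"

definition kappaC_basis :: "nat \<Rightarrow> complex \<Rightarrow> (nat \<Rightarrow> nat) \<Rightarrow> nat \<Rightarrow> nat \<Rightarrow> complex" where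
  "kappaC_basis n c g l m =
      (if is_kcycle n 3 g \<and> g l \<noteq> l \<and> m = g l then c
       else if is_kcycle n 3 g \<and> g m \<noteq> m \<and> l = g m then - c
       else 0)"

definition kappaL :: "nat \<Rightarrow> complex \<Rightarrow> complex \<Rightarrow> (nat \<Rightarrow> nat) \<Rightarrow> (nat \<Rightarrow> complex) \<Rightarrow> (nat \<Rightarrow> complex) \<Rightarrow> (nat \<Rightarrow> complex)" where
  "kappaL n a b g u w = (\<lambda>p. \<Sum>l<n. \<Sum>m<n. u l * w m * kappaL_basis n a b g l m p)"

definition kappaC :: "nat \<Rightarrow> complex \<Rightarrow> (nat \<Rightarrow> nat) \<Rightarrow> (nat \<Rightarrow> complex) \<Rightarrow> (nat \<Rightarrow> complex) \<Rightarrow> complex" where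
  "kappaC n c g u w = (\<Sum>l<n. \<Sum>m<n. u l * w m * kappaC_basis n c g l m)"

definition phi_xy :: "((nat \<Rightarrow> nat) \<Rightarrow> (nat \<Rightarrow> complex) \<Rightarrow> (nat \<Rightarrow> complex) \<Rightarrow> 'b::comm_monoid_add)
   \<Rightarrow> ((nat \<Rightarrow> nat) \<Rightarrow> (nat \<Rightarrow> complex) \<Rightarrow> (nat \<Rightarrow> complex) \<Rightarrow> (nat \<Rightarrow> complex))
   \<Rightarrow> (nat \<Rightarrow> nat) \<Rightarrow> (nat \<Rightarrow> nat) \<Rightarrow> (nat \<Rightarrow> complex) \<Rightarrow> (nat \<Rightarrow> complex) \<Rightarrow> (nat \<Rightarrow> complex) \<Rightarrow> 'b" where
  "phi_xy \<alpha> \<beta> x y v1 v2 v3 =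
     \<alpha> x (v1 + act y v1) (\<beta> y v2 v3) + \<alpha> x (v2 + act y v2) (\<beta> y v3 v1) + \<alpha> x (v3 + act y v3) (\<beta> y v1 v2)"

definition phi_g :: "nat \<Rightarrow> ((nat \<Rightarrow> nat) \<Rightarrow> (nat \<Rightarrow> complex) \<Rightarrow> (nat \<Rightarrow> complex) \<Rightarrow> 'b::comm_monoid_add)
   \<Rightarrow> ((nat \<Rightarrow> nat) \<Rightarrow> (nat \<Rightarrow> complex) \<Rightarrow> (nat \<Rightarrow> complex) \<Rightarrow> (nat \<Rightarrow> complex))
   \<Rightarrow> (nat \<Rightarrow> nat) \<Rightarrow> (nat \<Rightarrow> complex) \<Rightarrow> (nat \<Rightarrow> complex) \<Rightarrow> (nat \<Rightarrow> complex) \<Rightarrow> 'b" where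
  "phi_g n \<alpha> \<beta> g v1 v2 v3 =
     (\<Sum>(x, y) \<in> {(x, y). x permutes {..<n} \<and> y permutes {..<n} \<and> x \<circ> y = g}.
        phi_xy \<alpha> \<beta> x y v1 v2 v3)"

end

theory Submission
  imports Defs
begin

text \<open>
  Both cochains vanish off 3-cycles, and at a 3-cycle (i j k) each is the alternating form
  w_ijk = (e_i - e_k)* \<and> (e_j - e_k)* times a fixed value.  For 3-cycles x = (i j k) and
  y = (p q r) this turns phi_{x,y} into the 3-form w_pqr \<and> f, where f u = w_ijk(u + y u, W)
  and W is a on the support of y and b off it.  Unless the two supports meet in exactly one
  point, f is a combination of differences of the coordinates p, q, r, so the wedge
  vanishes; and if they meet in exactly one point, x y is a 5-cycle.
\<close>

lemma cycle_of_list_3: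
  "distinct [i, j, k] \<Longrightarrow>
     cycle_of_list [i, j, k] = (\<lambda>x. if x = i then j else if x = j then k else if x = k then i else x)"
  by (rule ext) (auto simp: transpose_def)

lemma cycle_of_list_5:
  "distinct [i, j, k, l, m] \<Longrightarrow>
     cycle_of_list [i, j, k, l, m] = (\<lambda>x. if x = i then j else if x = j then k else if x = k then l
                                         else if x = l then m else if x = m then i else x)"
  by (rule ext) (auto simp: transpose_def)

lemma cycle_of_list_3_rotate1:
  assumes "distinct [i, j, k]"
  shows "cycle_of_list [i, j, k] = cycle_of_list [j, k, i]"
proof -
  have "distinct [j, k, i]" using assms by auto
  then show ?thesis
    unfolding cycle_of_list_3[OF assms] cycle_of_list_3[of j k i] using assms by (auto simp: fun_eq_iff)
qed

lemma cycle_of_list_3_rotate: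
  assumes "distinct [i, j, k]" and "l \<in> {i, j, k}"
  obtains j' k' where "distinct [l, j', k']" "{l, j', k'} = {i, j, k}"
    "cycle_of_list [i, j, k] = cycle_of_list [l, j', k']"
proof -
  have "distinct [j, k, i]" using assms(1) by auto
  note rotations = cycle_of_list_3_rotate1[OF assms(1)] cycle_of_list_3_rotate1[OF this]
  from assms(2) consider "l = i" | "l = j" | "l = k" by blast
  then show ?thesis
  proof cases
    case 1
    show ?thesis by (rule that[of j k]) (use assms(1) 1 in auto)
  next
    case 2
    show ?thesis by (rule that[of k i]) (use assms(1) 2 rotations in auto)
  next
    case 3
    show ?thesis by (rule that[of i j]) (use assms(1) 3 rotations in auto)
  qed
qed

lemma cycle_of_list_3_comp_meeting_once:
  assumes "distinct [l, j, k]" "distinct [l, q, r]" "{j, k} \<inter> {q, r} = {}"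
  shows "cycle_of_list [l, j, k] \<circ> cycle_of_list [l, q, r] = cycle_of_list [l, q, r, j, k]"
proof -
  have "distinct [l, q, r, j, k]" using assms by auto
  then show ?thesis
    unfolding cycle_of_list_3[OF assms(1)] cycle_of_list_3[OF assms(2)] cycle_of_list_5
    using assms by (auto simp: fun_eq_iff)
qed

lemma is_kcycle_cycle_of_list:
  "distinct cs \<Longrightarrow> set cs \<subseteq> {..<n} \<Longrightarrow> length cs = k \<Longrightarrow> is_kcycle n k (cycle_of_list cs)"
  unfolding is_kcycle_def by blast

lemma is_kcycle_3E:
  assumes "is_kcycle n 3 x"
  obtains i j k where "distinct [i, j, k]" "{i, j, k} \<subseteq> {..<n}" "x = cycle_of_list [i, j, k]"
proof -
  obtain cs where cs: "length cs = 3" "distinct cs" "set cs \<subseteq> {..<n}" "x = cycle_of_list cs"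
    using assms unfolding is_kcycle_def by blast
  then obtain i j k where "cs = [i, j, k]"
    by (metis length_0_conv length_Suc_conv numeral_3_eq_3)
  then show ?thesis using that cs by auto
qed

lemma is_kcycle_5_comp_3_cycles:
  assumes x: "distinct [i, j, k]" and y: "distinct [p, q, r]"
    and bounds: "{i, j, k} \<subseteq> {..<n}" "{p, q, r} \<subseteq> {..<n}"
    and once: "card ({i, j, k} \<inter> {p, q, r}) = 1"
  shows "is_kcycle n 5 (cycle_of_list [i, j, k] \<circ> cycle_of_list [p, q, r])"
proof -
  obtain l where l: "{i, j, k} \<inter> {p, q, r} = {l}"
    using once by (meson card_1_singletonE)
  obtain j' k' where x': "distinct [l, j', k']" "{l, j', k'} = {i, j, k}"
    "cycle_of_list [i, j, k] = cycle_of_list [l, j', k']"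
    using cycle_of_list_3_rotate[OF x, of l] l by blast
  obtain q' r' where y': "distinct [l, q', r']" "{l, q', r'} = {p, q, r}"
    "cycle_of_list [p, q, r] = cycle_of_list [l, q', r']"
    using cycle_of_list_3_rotate[OF y, of l] l by blast
  have disj: "{j', k'} \<inter> {q', r'} = {}"
    using l x'(1,2) y'(1,2) by auto
  have "distinct [l, q', r', j', k']" "set [l, q', r', j', k'] \<subseteq> {..<n}"
    using x'(1,2) y'(1,2) disj bounds by auto
  then show ?thesis
    unfolding x'(3) y'(3) cycle_of_list_3_comp_meeting_once[OF x'(1) y'(1) disj]
    by (rule is_kcycle_cycle_of_list) simp
qed

text \<open>The value of kappa at the 3-cycle (i j k) on (u, w) is tri_form i j k u w times the
  value on the basis pair (e_i, e_j).\<close>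

definition tri_form :: "nat \<Rightarrow> nat \<Rightarrow> nat \<Rightarrow> (nat \<Rightarrow> complex) \<Rightarrow> (nat \<Rightarrow> complex) \<Rightarrow> complex" where
  "tri_form i j k u w = u i * w j + u j * w k + u k * w i - u j * w i - u k * w j - u i * w k"

definition weight_on :: "nat \<Rightarrow> complex \<Rightarrow> complex \<Rightarrow> nat set \<Rightarrow> nat \<Rightarrow> complex" where
  "weight_on n a b S p = (if p < n then if p \<in> S then a else b else 0)"

lemma sum_sum_restrict:
  fixes F :: "'a \<Rightarrow> 'a \<Rightarrow> 'b::comm_monoid_add"
  assumes "finite A" "S \<subseteq> A" "\<And>l m. l \<notin> S \<or> m \<notin> S \<Longrightarrow> F l m = 0"
  shows "(\<Sum>l\<in>A. \<Sum>m\<in>A. F l m) = (\<Sum>l\<in>S. \<Sum>m\<in>S. F l m)"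
proof -
  have "(\<Sum>l\<in>A. \<Sum>m\<in>A. F l m) = (\<Sum>l\<in>S. \<Sum>m\<in>A. F l m)"
    by (rule sum.mono_neutral_right) (use assms in auto)
  also have "\<dots> = (\<Sum>l\<in>S. \<Sum>m\<in>S. F l m)"
    by (rule sum.cong[OF refl], rule sum.mono_neutral_right) (use assms in auto)
  finally show ?thesis .
qed

lemma sum_sum_three_cycle_alternating:
  fixes w :: complex
  assumes d: "distinct [i, j, k]" and bounds: "{i, j, k} \<subseteq> {..<n}"
  defines "y \<equiv> cycle_of_list [i, j, k]"
  shows "(\<Sum>l<n. \<Sum>m<n. u l * v m *
            (if l \<in> {i, j, k} \<and> m = y l then w else if m \<in> {i, j, k} \<and> l = y m then - w else 0))
         = tri_form i j k u v * w"
proof -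
  have y: "y = (\<lambda>x. if x = i then j else if x = j then k else if x = k then i else x)"
    unfolding y_def using cycle_of_list_3[OF d] .
  show ?thesis
    by (subst sum_sum_restrict[where S = "{i, j, k}"])
       (use d bounds in \<open>auto simp: y tri_form_def algebra_simps\<close>)
qed

lemma cycle_of_list_3_moves_iff:
  "distinct [i, j, k] \<Longrightarrow> cycle_of_list [i, j, k] l \<noteq> l \<longleftrightarrow> l \<in> {i, j, k}"
  by (subst cycle_of_list_3) auto

lemma kappaL_three_cycle:
  assumes d: "distinct [i, j, k]" and bounds: "{i, j, k} \<subseteq> {..<n}"
  shows "kappaL n a b (cycle_of_list [i, j, k]) u w
           = (\<lambda>p. tri_form i j k u w * weight_on n a b {i, j, k} p)"
proof
  fix p
  let ?y = "cycle_of_list [i, j, k]" and ?w = "weight_on n a b {i, j, k} p"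
  have "is_kcycle n 3 ?y"
    by (rule is_kcycle_cycle_of_list) (use d bounds in simp_all)
  then have "kappaL_basis n a b ?y l m p =
      (if l \<in> {i, j, k} \<and> m = ?y l then ?w else if m \<in> {i, j, k} \<and> l = ?y m then - ?w else 0)" for l m
    unfolding kappaL_basis_def Let_def weight_on_def cycle_of_list_3_moves_iff[OF d] by simp
  then show "kappaL n a b ?y u w p = tri_form i j k u w * ?w"
    unfolding kappaL_def using sum_sum_three_cycle_alternating[OF d bounds] by presburger
qed

lemma kappaC_three_cycle:
  assumes d: "distinct [i, j, k]" and bounds: "{i, j, k} \<subseteq> {..<n}"
  shows "kappaC n c (cycle_of_list [i, j, k]) u w = c * tri_form i j k u w"
proof -
  let ?y = "cycle_of_list [i, j, k]"
  have "is_kcycle n 3 ?y"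
    by (rule is_kcycle_cycle_of_list) (use d bounds in simp_all)
  then have "kappaC_basis n c ?y l m =
      (if l \<in> {i, j, k} \<and> m = ?y l then c else if m \<in> {i, j, k} \<and> l = ?y m then - c else 0)" for l m
    unfolding kappaC_basis_def cycle_of_list_3_moves_iff[OF d] by simp
  then show ?thesis
    unfolding kappaC_def using sum_sum_three_cycle_alternating[OF d bounds] by (simp only: mult.commute)
qed

lemma tri_form_scale_right: "tri_form i j k u (\<lambda>p. \<kappa> * w p) = \<kappa> * tri_form i j k u w"
  by (simp add: tri_form_def algebra_simps)

lemma kappaL_not_three_cycle: "\<not> is_kcycle n 3 y \<Longrightarrow> kappaL n a b y u w = 0"
  unfolding kappaL_def kappaL_basis_def by (simp add: zero_fun_def)

lemma kappaC_not_three_cycle: "\<not> is_kcycle n 3 y \<Longrightarrow> kappaC n c y u w = 0"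
  unfolding kappaC_def kappaC_basis_def by simp

lemma kappaL_zero_right: "kappaL n a b y u 0 = 0"
  unfolding kappaL_def by (simp add: zero_fun_def)

lemma kappaC_zero_right: "kappaC n c y u 0 = 0"
  unfolding kappaC_def by simp

text \<open>The 3-form tri_form p q r \<and> f; it vanishes for f in the span of the differences of the
  coordinates p, q, r, since tri_form p q r = (e_p - e_r)* \<and> (e_q - e_r)*.\<close>

definition cyclic_wedge ::
  "nat \<Rightarrow> nat \<Rightarrow> nat \<Rightarrow> ((nat \<Rightarrow> complex) \<Rightarrow> complex) \<Rightarrow>
     (nat \<Rightarrow> complex) \<Rightarrow> (nat \<Rightarrow> complex) \<Rightarrow> (nat \<Rightarrow> complex) \<Rightarrow> complex" where
  "cyclic_wedge p q r f v1 v2 v3 =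
     tri_form p q r v2 v3 * f v1 + tri_form p q r v3 v1 * f v2 + tri_form p q r v1 v2 * f v3"

lemma cyclic_wedge_coordinate_difference:
  "s \<in> {p, q, r} \<Longrightarrow> t \<in> {p, q, r} \<Longrightarrow> cyclic_wedge p q r (\<lambda>u. u s - u t) v1 v2 v3 = 0"
  by (auto simp: cyclic_wedge_def tri_form_def algebra_simps)

lemma cyclic_wedge_scaled_sum:
  "cyclic_wedge p q r (\<lambda>u. \<kappa> * (f u + g u)) v1 v2 v3
     = \<kappa> * (cyclic_wedge p q r f v1 v2 v3 + cyclic_wedge p q r g v1 v2 v3)"
  by (simp add: cyclic_wedge_def algebra_simps)

lemma tri_form_weight_on:
  assumes d: "distinct [i, j, k]" and bounds: "{i, j, k} \<subseteq> {..<n}"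
    and "T \<noteq> {}" and not_once: "card ({i, j, k} \<inter> T) \<noteq> 1"
  obtains s t where "s \<in> T" "t \<in> T" "\<And>U. tri_form i j k U (weight_on n a b T) = (a - b) * (U s - U t)"
proof -
  obtain s0 where "s0 \<in> T" using \<open>T \<noteq> {}\<close> by blast
  have W: "weight_on n a b T l = (if l \<in> T then a else b)" if "l \<in> {i, j, k}" for l
    using that bounds by (auto simp: weight_on_def)
  have "{i, j, k} \<inter> T \<noteq> {l}" for l
    using not_once by auto
  then consider "{i, j, k} \<subseteq> T \<or> {i, j, k} \<inter> T = {}"
    | "i \<in> T" "j \<in> T" "k \<notin> T" | "j \<in> T" "k \<in> T" "i \<notin> T" | "k \<in> T" "i \<in> T" "j \<notin> T"
    using d by auto
  then show ?thesis
  proof cases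
    case 1
    show ?thesis by (rule that[of s0 s0]) (use \<open>s0 \<in> T\<close> 1 in \<open>auto simp: tri_form_def W algebra_simps\<close>)
  next
    case 2
    show ?thesis by (rule that[of i j]) (use d 2 in \<open>simp_all add: tri_form_def W algebra_simps\<close>)
  next
    case 3
    show ?thesis by (rule that[of j k]) (use d 3 in \<open>simp_all add: tri_form_def W algebra_simps\<close>)
  next
    case 4
    show ?thesis by (rule that[of k i]) (use d 4 in \<open>simp_all add: tri_form_def W algebra_simps\<close>)
  qed
qed

lemma phi_xy_three_cycles_eq_0:
  assumes x: "distinct [i, j, k]" and y: "distinct [p, q, r]"
    and bounds: "{i, j, k} \<subseteq> {..<n}" "{p, q, r} \<subseteq> {..<n}"
    and not_once: "card ({i, j, k} \<inter> {p, q, r}) \<noteq> 1"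
  defines "cx \<equiv> cycle_of_list [i, j, k]" and "cy \<equiv> cycle_of_list [p, q, r]"
  shows "phi_xy (kappaL n a b) (kappaL n a b) cx cy v1 v2 v3 = 0"
    and "phi_xy (kappaC n c) (kappaL n a b) cx cy v1 v2 v3 = 0"
proof -
  obtain s t where st: "s \<in> {p, q, r}" "t \<in> {p, q, r}"
    and tri: "\<And>U. tri_form i j k U (weight_on n a b {p, q, r}) = (a - b) * (U s - U t)"
    using tri_form_weight_on[OF x bounds(1) _ not_once] by blast
  have inv_cy: "inv cy permutes {p, q, r}"
    unfolding cy_def using permutes_inv[OF cycle_permutes[of "[p, q, r]"]] by simp
  have inv_st: "inv cy s \<in> {p, q, r}" "inv cy t \<in> {p, q, r}"
    using permutes_in_image[OF inv_cy] st by blast+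
  define f where "f u = tri_form i j k (u + act cy u) (weight_on n a b {p, q, r})" for u
  have "f u = (a - b) * ((u + act cy u) s - (u + act cy u) t)" for u
    unfolding f_def by (rule tri)
  then have f_eq: "f = (\<lambda>u. (a - b) * ((u s - u t) + (u (inv cy s) - u (inv cy t))))"
    by (simp add: fun_eq_iff act_def)
  have wedge: "cyclic_wedge p q r f v1 v2 v3 = 0"
    unfolding f_eq cyclic_wedge_scaled_sum
    using cyclic_wedge_coordinate_difference[OF st] cyclic_wedge_coordinate_difference[OF inv_st] by simp
  have "kappaL n a b cx U (kappaL n a b cy v w)
          = (\<lambda>z. tri_form p q r v w * tri_form i j k U (weight_on n a b {p, q, r}) * weight_on n a b {i, j, k} z)"
    for U v w
    unfolding cx_def cy_def kappaL_three_cycle[OF x bounds(1)] kappaL_three_cycle[OF y bounds(2)]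
      tri_form_scale_right ..
  then have "phi_xy (kappaL n a b) (kappaL n a b) cx cy v1 v2 v3
               = (\<lambda>z. cyclic_wedge p q r f v1 v2 v3 * weight_on n a b {i, j, k} z)"
    unfolding phi_xy_def cyclic_wedge_def f_def by (simp add: fun_eq_iff algebra_simps)
  then show "phi_xy (kappaL n a b) (kappaL n a b) cx cy v1 v2 v3 = 0"
    by (simp add: wedge zero_fun_def)
  have "kappaC n c cx U (kappaL n a b cy v w)
          = c * (tri_form p q r v w * tri_form i j k U (weight_on n a b {p, q, r}))" for U v w
    unfolding cx_def cy_def kappaC_three_cycle[OF x bounds(1)] kappaL_three_cycle[OF y bounds(2)]
      tri_form_scale_right ..
  then have "phi_xy (kappaC n c) (kappaL n a b) cx cy v1 v2 v3 = c * cyclic_wedge p q r f v1 v2 v3"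
    unfolding phi_xy_def cyclic_wedge_def f_def by (simp add: algebra_simps)
  then show "phi_xy (kappaC n c) (kappaL n a b) cx cy v1 v2 v3 = 0"
    by (simp add: wedge)
qed

lemma phi_xy_eq_0_unless_5_cycle:
  assumes "\<not> is_kcycle n 5 (x \<circ> y)"
  shows "phi_xy (kappaL n a b) (kappaL n a b) x y v1 v2 v3 = 0"
    and "phi_xy (kappaC n c) (kappaL n a b) x y v1 v2 v3 = 0"
proof -
  consider "\<not> is_kcycle n 3 x" | "\<not> is_kcycle n 3 y" | "is_kcycle n 3 x" "is_kcycle n 3 y"
    by blast
  then have "phi_xy (kappaL n a b) (kappaL n a b) x y v1 v2 v3 = 0
           \<and> phi_xy (kappaC n c) (kappaL n a b) x y v1 v2 v3 = 0"
  proof cases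
    case 1
    then show ?thesis by (simp add: phi_xy_def kappaL_not_three_cycle kappaC_not_three_cycle)
  next
    case 2
    then show ?thesis by (simp add: phi_xy_def kappaL_not_three_cycle kappaL_zero_right kappaC_zero_right)
  next
    case 3
    obtain i j k where x: "distinct [i, j, k]" "{i, j, k} \<subseteq> {..<n}" "x = cycle_of_list [i, j, k]"
      using is_kcycle_3E[OF 3(1)] .
    obtain p q r where y: "distinct [p, q, r]" "{p, q, r} \<subseteq> {..<n}" "y = cycle_of_list [p, q, r]"
      using is_kcycle_3E[OF 3(2)] .
    have "card ({i, j, k} \<inter> {p, q, r}) \<noteq> 1"
      using is_kcycle_5_comp_3_cycles[OF x(1) y(1) x(2) y(2)] assms x(3) y(3) by blast
    then show ?thesis
      using phi_xy_three_cycles_eq_0[OF x(1) y(1) x(2) y(2)] x(3) y(3) by blast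
  qed
  then show "phi_xy (kappaL n a b) (kappaL n a b) x y v1 v2 v3 = 0"
    and "phi_xy (kappaC n c) (kappaL n a b) x y v1 v2 v3 = 0"
    by blast+
qed

theorem proposition7p2:
  fixes n :: nat and a b c :: complex and g :: "nat \<Rightarrow> nat"
  assumes "n \<ge> 3"
    and "g permutes {..<n}"
    and "\<not> is_kcycle n 5 g"
  shows "\<forall>v1 \<in> vecV n. \<forall>v2 \<in> vecV n. \<forall>v3 \<in> vecV n.
           phi_g n (kappaL n a b) (kappaL n a b) g v1 v2 v3 = 0
         \<and> phi_g n (kappaC n c) (kappaL n a b) g v1 v2 v3 = 0"
proof (intro ballI conjI)
  fix v1 v2 v3
  show "phi_g n (kappaL n a b) (kappaL n a b) g v1 v2 v3 = 0"
    unfolding phi_g_def by (rule sum.neutral) (use phi_xy_eq_0_unless_5_cycle assms(3) in auto)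
  show "phi_g n (kappaC n c) (kappaL n a b) g v1 v2 v3 = 0"
    unfolding phi_g_def by (rule sum.neutral) (use phi_xy_eq_0_unless_5_cycle assms(3) in auto)
qed

end
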